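(* Let $k\ge2$ be even, $\alpha_1,\dots,\alpha_k$ positive integers, and $G=C(\alpha_1,\dots,\alpha_k)$. Then the clique number of $G$ is $$\omega(G)=\max_{1\le i\le k/2}\Big\{\alpha_{2i-1}+\Big(\frac{k}{2}-i+1\Big)\Big\}.$$
   Context: $C(\alpha_1,\dots,\alpha_k)$ is defined recursively by $C(\alpha_1)=\overline{K_{\alpha_1}}$ (edgeless graph) and $C(\alpha_1,\dots,\alpha_i)=\overline{C(\alpha_1,\dots,\alpha_{i-1})\cup K_{\alpha_i}}$ for $i=2,\dots,k$ (disjoint union, then complement). Equivalently for $k$ even, with $\pi_i$ the $\alpha_i$ vertices introduced at step $i$: $\pi_i$ is a clique for $i$ odd, independent for $i$ even, and for $i<j$ vertices of $\pi_i,\pi_j$ are adjacent iff $j$ is even. $\omega(G)$ is the maximum size of a clique in $G$. *)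

theory Defs
  imports Main
begin

text \<open>Vertices of C(alpha_1,...,alpha_m): pairs (i,j) with 1 <= i <= m, j < alpha i;
  the block pi_i consists of the alpha_i vertices (i,_) introduced at step i.\<close>
definition cverts :: "(nat \<Rightarrow> nat) \<Rightarrow> nat \<Rightarrow> (nat \<times> nat) set" where
  "cverts \<alpha> m = {(i, j). 1 \<le> i \<and> i \<le> m \<and> j < \<alpha> i}"

text \<open>Adjacency of C(alpha_1,...,alpha_m), following the recursive definition:
  C(alpha_1) is edgeless; C(alpha_1..alpha_i) is the complement of the disjoint union
  of C(alpha_1..alpha_(i-1)) with the clique on pi_i. (Meaningful on cverts.)\<close>
fun cadj :: "(nat \<Rightarrow> nat) \<Rightarrow> nat \<Rightarrow> nat \<times> nat \<Rightarrow> nat \<times> nat \<Rightarrow> bool" where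
  "cadj \<alpha> 0 u v = False"
| "cadj \<alpha> (Suc 0) u v = False"
| "cadj \<alpha> (Suc (Suc n)) u v =
     (u \<noteq> v \<and> \<not> (if fst u \<le> Suc n \<and> fst v \<le> Suc n then cadj \<alpha> (Suc n) u v
                 else if fst u = Suc (Suc n) \<and> fst v = Suc (Suc n) then True
                 else False))"

definition is_clique :: "'a set \<Rightarrow> ('a \<Rightarrow> 'a \<Rightarrow> bool) \<Rightarrow> 'a set \<Rightarrow> bool" where
  "is_clique V E S \<longleftrightarrow> S \<subseteq> V \<and> (\<forall>u\<in>S. \<forall>v\<in>S. u \<noteq> v \<longrightarrow> E u v)"

definition clique_number :: "'a set \<Rightarrow> ('a \<Rightarrow> 'a \<Rightarrow> bool) \<Rightarrow> nat" where
  "clique_number V E = Max {card S | S. is_clique V E S}"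

end

theory Submission imports Defs begin

text \<open>Unfolding the recursion, two distinct vertices of C(alpha_1,...,alpha_m) in blocks i \<le> j are adjacent
  iff the number m - j of complementations applied after block j entered is even, except
  that inside a block (i = j) the block starts as a clique, so the parity flips. For even m
  this makes odd blocks cliques, even blocks independent, and a pair from different blocks
  adjacent iff the later block is even. A clique therefore uses at most one odd block pi_(2i-1),
  plus at most one vertex from each even block after it, which gives the upper bound; the
  block pi_(2i-1) together with one vertex of each of pi_(2i), pi_(2i+2), ..., pi_k attains it.\<close>

lemma cadj_Suc_closed_form:
  assumes "1 \<le> fst u" "1 \<le> fst v" "fst u \<le> Suc n" "fst v \<le> Suc n"
  shows "cadj \<alpha> (Suc n) u v \<longleftrightarrow>
    u \<noteq> v \<and> (if fst u = fst v then odd (Suc n - fst u) else even (Suc n - max (fst u) (fst v)))"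
  using assms
proof (induction n arbitrary: u v)
  case 0
  then have "fst u = 1" "fst v = 1" by auto
  then show ?case by simp
next
  case (Suc n)
  show ?case
  proof (cases "fst u \<le> Suc n \<and> fst v \<le> Suc n")
    case True
    with Suc.IH[of u v] Suc.prems show ?thesis by (auto simp: max_def)
  next
    case False
    then have "fst u = Suc (Suc n) \<or> fst v = Suc (Suc n)"
      using Suc.prems by auto
    then show ?thesis
      using False Suc.prems by (cases "fst u = fst v") (auto simp: max_def)
  qed
qed

definition cadj_even :: "nat \<times> nat \<Rightarrow> nat \<times> nat \<Rightarrow> bool" where
  "cadj_even u v \<longleftrightarrow>
    u \<noteq> v \<and> (if fst u = fst v then odd (fst u) else even (max (fst u) (fst v)))"

lemma cadj_eq_cadj_even:
  assumes "even k" "u \<in> cverts \<alpha> k" "v \<in> cverts \<alpha> k"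
  shows "cadj \<alpha> k u v \<longleftrightarrow> cadj_even u v"
proof -
  obtain n where k: "k = Suc n"
    using assms(2) by (cases k) (auto simp: cverts_def)
  show ?thesis
    using cadj_Suc_closed_form[of u v n \<alpha>] assms
    by (auto simp: k cadj_even_def cverts_def max_def)
qed

lemma is_clique_cong:
  assumes "\<And>u v. u \<in> V \<Longrightarrow> v \<in> V \<Longrightarrow> E u v \<longleftrightarrow> E' u v"
  shows "is_clique V E S \<longleftrightarrow> is_clique V E' S"
  using assms unfolding is_clique_def by blast

lemma clique_number_eqI:
  assumes "finite V"
    and "\<And>S. is_clique V E S \<Longrightarrow> card S \<le> m"
    and "is_clique V E S" "card S = m"
  shows "clique_number V E = m"
proof -
  have "{card S | S. is_clique V E S} \<subseteq> card ` Pow V"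
    by (auto simp: is_clique_def)
  then have "finite {card S | S. is_clique V E S}"
    using assms(1) by (meson finite_Pow_iff finite_imageI finite_subset)
  then show ?thesis
    unfolding clique_number_def using assms(2-4) by (intro Max_eqI) auto
qed

lemma finite_cverts: "finite (cverts \<alpha> k)"
proof (rule finite_subset)
  show "cverts \<alpha> k \<subseteq> (SIGMA i:{1..k}. {..<\<alpha> i})"
    by (auto simp: cverts_def)
qed auto

context
  fixes k :: nat and \<alpha> :: "nat \<Rightarrow> nat" and S :: "(nat \<times> nat) set"
  assumes k: "even k" "k \<ge> 2"
    and clique: "is_clique (cverts \<alpha> k) cadj_even S"
begin

private lemma clique_adj: "u \<in> S \<Longrightarrow> v \<in> S \<Longrightarrow> u \<noteq> v \<Longrightarrow> cadj_even u v"
  using clique by (auto simp: is_clique_def)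

private lemma clique_vertex: "u \<in> S \<Longrightarrow> 1 \<le> fst u \<and> fst u \<le> k \<and> snd u < \<alpha> (fst u)"
  using clique by (auto simp: is_clique_def cverts_def)

lemma clique_even_part_inj: "inj_on fst {u \<in> S. even (fst u)}"
  by (rule inj_onI) (use clique_adj in \<open>force simp: cadj_even_def\<close>)

lemma clique_shape:
  obtains i where "1 \<le> i" "i \<le> k div 2"
    "\<And>u. u \<in> S \<Longrightarrow> odd (fst u) \<Longrightarrow> fst u = 2 * i - 1"
    "\<And>u. u \<in> S \<Longrightarrow> even (fst u) \<Longrightarrow> 2 * i - 1 < fst u"
proof (cases "\<exists>w \<in> S. odd (fst w)")
  case True
  then obtain w where w: "w \<in> S" "odd (fst w)" by blast
  define i where "i = (fst w + 1) div 2"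
  have fst_w: "fst w = 2 * i - 1"
    using w(2) by (auto simp: i_def elim: oddE)
  have "1 \<le> i" "i \<le> k div 2"
    using clique_vertex[OF w(1)] w(2) k by (auto simp: i_def elim!: evenE oddE)
  moreover have "fst u = 2 * i - 1" if "u \<in> S" "odd (fst u)" for u
    using clique_adj[OF that(1) w(1)] that w(2) fst_w
    by (cases "u = w") (auto simp: cadj_even_def max_def split: if_splits)
  moreover have "2 * i - 1 < fst u" if "u \<in> S" "even (fst u)" for u
    using clique_adj[OF that(1) w(1)] that w(2) fst_w
    by (cases "u = w") (auto simp: cadj_even_def max_def split: if_splits)
  ultimately show thesis by (rule that)
next
  case False
  have "1 < fst u" if "u \<in> S" "even (fst u)" for u
    using clique_vertex[OF that(1)] that(2) by (cases "fst u = 1") auto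
  with False k show thesis
    by (intro that[of 1]) simp_all
qed

lemma card_clique_le:
  obtains i where "1 \<le> i" "i \<le> k div 2" "card S \<le> \<alpha> (2 * i - 1) + (k div 2 - i + 1)"
proof -
  obtain i where i: "1 \<le> i" "i \<le> k div 2"
    and odd_part: "\<And>u. u \<in> S \<Longrightarrow> odd (fst u) \<Longrightarrow> fst u = 2 * i - 1"
    and even_part: "\<And>u. u \<in> S \<Longrightarrow> even (fst u) \<Longrightarrow> 2 * i - 1 < fst u"
    using clique_shape by blast
  define Od where "Od = {u \<in> S. odd (fst u)}"
  define Ev where "Ev = {u \<in> S. even (fst u)}"
  have "Od \<subseteq> {2 * i - 1} \<times> {..<\<alpha> (2 * i - 1)}"
    using odd_part clique_vertex by (force simp: Od_def)
  then have card_Od: "card Od \<le> \<alpha> (2 * i - 1)"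
    using card_mono[of "{2 * i - 1} \<times> {..<\<alpha> (2 * i - 1)}" Od]
    by (simp add: card_cartesian_product)
  have Ev_blocks: "fst ` Ev \<subseteq> (\<lambda>l. 2 * l) ` {i..k div 2}"
  proof
    fix j assume "j \<in> fst ` Ev"
    then obtain u where u: "u \<in> S" "even (fst u)" "j = fst u" by (auto simp: Ev_def)
    then have "2 * i - 1 < j" "j \<le> k" "even j"
      using even_part clique_vertex by auto
    then show "j \<in> (\<lambda>l. 2 * l) ` {i..k div 2}"
      by (intro image_eqI[of _ _ "j div 2"]) auto
  qed
  have "card ((\<lambda>l. 2 * l) ` {i..k div 2}) = k div 2 - i + 1"
    using i by (simp add: card_image inj_on_def)
  then have "card (fst ` Ev) \<le> k div 2 - i + 1"
    using card_mono[OF _ Ev_blocks] by simp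
  then have card_Ev: "card Ev \<le> k div 2 - i + 1"
    using clique_even_part_inj by (simp add: Ev_def card_image)
  have "finite S"
    using clique finite_cverts by (auto simp: is_clique_def intro: finite_subset)
  then have "card S = card Od + card Ev"
    unfolding Od_def Ev_def by (subst card_Un_disjoint[symmetric]) (auto intro: arg_cong[where f = card])
  with card_Od card_Ev show thesis
    using that[OF i] by simp
qed

end

lemma clique_odd_block_and_even_tail:
  assumes k: "even k" and pos: "\<forall>i. 1 \<le> i \<and> i \<le> k \<longrightarrow> \<alpha> i > 0"
    and i: "1 \<le> i" "i \<le> k div 2"
  defines "S \<equiv> {2 * i - 1} \<times> {..<\<alpha> (2 * i - 1)} \<union> (\<lambda>l. (2 * l, 0)) ` {i..k div 2}"
  shows "is_clique (cverts \<alpha> k) cadj_even S"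
    and "card S = \<alpha> (2 * i - 1) + (k div 2 - i + 1)"
proof -
  have odd_block: "odd (2 * i - 1)"
    using i by presburger
  then have disjoint: "{2 * i - 1} \<times> {..<\<alpha> (2 * i - 1)} \<inter> (\<lambda>l. (2 * l, 0)) ` {i..k div 2} = {}"
    by auto
  have "inj_on (\<lambda>l. (2 * l, 0::nat)) {i..k div 2}"
    by (auto simp: inj_on_def)
  then show "card S = \<alpha> (2 * i - 1) + (k div 2 - i + 1)"
    using i disjoint by (simp add: S_def card_Un_disjoint card_cartesian_product card_image)
  have "\<alpha> (2 * l) > 0" if "i \<le> l" "l \<le> k div 2" for l
    using pos that i k by auto
  then have "S \<subseteq> cverts \<alpha> k"
    using i k by (auto simp: S_def cverts_def)
  moreover have "cadj_even u v" if "u \<in> S" "v \<in> S" "u \<noteq> v" for u v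
    using that odd_block i by (auto simp: S_def cadj_even_def max_def)
  ultimately show "is_clique (cverts \<alpha> k) cadj_even S"
    by (auto simp: is_clique_def)
qed

theorem theorem5p1:
  fixes k :: nat and \<alpha> :: "nat \<Rightarrow> nat"
  assumes "k \<ge> 2" and "even k"
    and "\<forall>i. 1 \<le> i \<and> i \<le> k \<longrightarrow> \<alpha> i > 0"
  shows "clique_number (cverts \<alpha> k) (cadj \<alpha> k)
           = Max {\<alpha> (2 * i - 1) + (k div 2 - i + 1) | i. 1 \<le> i \<and> i \<le> k div 2}"
proof -
  define f where "f i = \<alpha> (2 * i - 1) + (k div 2 - i + 1)" for i
  have maximands: "{\<alpha> (2 * i - 1) + (k div 2 - i + 1) | i. 1 \<le> i \<and> i \<le> k div 2} = f ` {1..k div 2}"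
    unfolding f_def atLeastAtMost_iff[symmetric] by blast
  obtain i where i: "i \<in> {1..k div 2}" "Max (f ` {1..k div 2}) = f i"
    using Max_in[of "f ` {1..k div 2}"] assms(1) by fastforce
  have cliques: "is_clique (cverts \<alpha> k) (cadj \<alpha> k) S \<longleftrightarrow> is_clique (cverts \<alpha> k) cadj_even S" for S
    using cadj_eq_cadj_even[OF assms(2)] by (rule is_clique_cong)
  have upper: "card S \<le> f i" if "is_clique (cverts \<alpha> k) (cadj \<alpha> k) S" for S
  proof -
    have "is_clique (cverts \<alpha> k) cadj_even S"
      using that cliques by simp
    then obtain j where "1 \<le> j" "j \<le> k div 2" "card S \<le> f j"
      unfolding f_def by (rule card_clique_le[OF assms(2,1)])
    moreover have "f j \<le> f i"
      using i calculation by (metis Max_ge atLeastAtMost_iff finite_atLeastAtMost finite_imageI image_eqI)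
    ultimately show ?thesis
      by simp
  qed
  obtain S where "is_clique (cverts \<alpha> k) cadj_even S" "card S = f i"
    using clique_odd_block_and_even_tail[OF assms(2,3)] i unfolding f_def by auto
  then have "clique_number (cverts \<alpha> k) (cadj \<alpha> k) = f i"
    using clique_number_eqI[OF finite_cverts upper] cliques by blast
  then show ?thesis
    unfolding maximands using i(2) by simp
qed

end
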